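(* For a space $X$ the following are equivalent: (1) $X$ is $L$-selective; (2) $X$ is $S_2$-selective; (3) $X$ is $S_\omega$-selective.
   Context: All spaces are assumed $T_1$. For spaces $Y$, $X$, a map $\varphi:Y\to\mathcal P(X)\setminus\{\emptyset\}$ is lower semicontinuous (l.s.c.) if $\{y:\varphi(y)\cap U\neq\emptyset\}$ is open in $Y$ for every open $U\subseteq X$; a selection is a map $f:Y\to X$ with $f(y)\in\varphi(y)$ for all $y$. $X$ is $Y$-selective if every l.s.c. map from $Y$ to the nonempty closed subsets of $X$ has a continuous selection; $L$-selective means $(\omega+1)$-selective, with $\omega+1$ carrying the order topology. The sequential fan $S_\omega$ is the quotient of the topological sum of countably many convergent sequences (with limits) obtained by identifying all limit points. Arens' space $S_2=\{x\}\cup\{x_n:n\in\omega\}\cup\{x_{n,m}:n,m\in\omega\}$: each $x_{n,m}$ is isolated; a neighborhood base at $x_n$ consists of the sets $\{x_n\}\cup\{x_{n,m}:m\in\omega\setminus K\}$, $K$ finite; a neighborhood base at $x$ consists of the sets $\{x\}\cup\{x_n:n\in\omega\setminus K\}\cup\{x_{n,m}:n\in\omega\setminus K,\ m>f(n)\}$ with $K$ finite and $f:\omega\to\omega$. *)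

theory Defs
  imports "HOL-Analysis.Analysis" "HOL-Library.Extended_Real"
begin

definition lsc_map :: "'b topology \<Rightarrow> 'a topology \<Rightarrow> ('b \<Rightarrow> 'a set) \<Rightarrow> bool" where
  "lsc_map Y X \<phi> \<longleftrightarrow>
     (\<forall>y\<in>topspace Y. \<phi> y \<subseteq> topspace X \<and> \<phi> y \<noteq> {}) \<and>
     (\<forall>U. openin X U \<longrightarrow> openin Y {y \<in> topspace Y. \<phi> y \<inter> U \<noteq> {}})"

definition selective :: "'b topology \<Rightarrow> 'a topology \<Rightarrow> bool" where
  "selective Y X \<longleftrightarrow>
     (\<forall>\<phi>. lsc_map Y X \<phi> \<and> (\<forall>y\<in>topspace Y. closedin X (\<phi> y)) \<longrightarrow>
        (\<exists>f. continuous_map Y X f \<and> (\<forall>y\<in>topspace Y. f y \<in> \<phi> y)))"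

text \<open>omega+1 with the order topology: enat with its (order) topology.\<close>
definition omega_plus_one :: "enat topology" where
  "omega_plus_one = euclidean"

definition L_selective :: "'a topology \<Rightarrow> bool" where
  "L_selective X \<longleftrightarrow> selective omega_plus_one X"

definition quotient_topology :: "'a topology \<Rightarrow> ('a \<Rightarrow> 'b) \<Rightarrow> 'b topology" where
  "quotient_topology T q = topology_generated_by
     {U. U \<subseteq> q ` topspace T \<and> openin T {x \<in> topspace T. q x \<in> U}}"

text \<open>Sequential fan: countably many copies of omega+1 (convergent sequences with limits),
  topological sum, all limit points identified (to (0, infinity)).\<close>
definition fan_quot :: "nat \<times> enat \<Rightarrow> nat \<times> enat" where
  "fan_quot p = (if snd p = \<infinity> then (0, \<infinity>) else p)"

definition S_omega :: "(nat \<times> enat) topology" where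
  "S_omega = quotient_topology (sum_topology (\<lambda>n. omega_plus_one) UNIV) fan_quot"

datatype S2pt = Xpt | Xn nat | Xnm nat nat

definition S2_nbhd_base :: "S2pt set set" where
  "S2_nbhd_base =
     {{Xnm n m} | n m. True} \<union>
     {insert (Xn n) {Xnm n m | m. m \<notin> K} | n K. finite K} \<union>
     {insert Xpt ({Xn n | n. n \<notin> K} \<union> {Xnm n m | n m. n \<notin> K \<and> m > f n}) | K f. finite K}"

definition S2 :: "S2pt topology" where
  "S2 = topology_generated_by S2_nbhd_base"

end

theory Submission
  imports Defs
begin

(* Selectivity passes to retracts: an l.s.c. map on the retract is pulled back along the
   retraction, and a selection of the pullback is pulled back along the section. Since
   omega+1 is a retract of both S_omega (collapse all sequences to one) and S2 (project
   each x_{n,m} to x_n), S2- and S_omega-selectivity imply L-selectivity.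
   Conversely, in a T1 space every point p of phi(omega) is closed, and replacing phi(omega)
   by {p} keeps phi lower semicontinuous, so L-selectivity yields selections with a
   prescribed limit value. S_omega is glued from copies of omega+1 along their limits, and
   S2 from the spine x_n -> x together with a sequence x_{n,m} -> x_n for each n; choosing
   selections on the pieces whose limits match the values already chosen glues them into a
   continuous selection. *)

lemma open_enat_iff_tail:
  fixes A :: "enat set"
  shows "open A \<longleftrightarrow> (\<infinity> \<in> A \<longrightarrow> (\<exists>N. \<forall>n\<ge>N. enat n \<in> A))"
proof -
  have "(\<exists>n::nat. {enat n<..} \<subseteq> A) \<longleftrightarrow> (\<exists>N. \<forall>n\<ge>N. enat n \<in> A)" if "\<infinity> \<in> A"
  proof
    assume "\<exists>n::nat. {enat n<..} \<subseteq> A"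
    then obtain n where "{enat n<..} \<subseteq> A" by blast
    then have "\<forall>m\<ge>Suc n. enat m \<in> A" by auto
    then show "\<exists>N. \<forall>n\<ge>N. enat n \<in> A" by blast
  next
    assume "\<exists>N. \<forall>n\<ge>N. enat n \<in> A"
    then obtain N where N: "\<forall>n\<ge>N. enat n \<in> A" by blast
    have "{enat N<..} \<subseteq> A"
    proof
      fix x assume "x \<in> {enat N<..}"
      then show "x \<in> A" using N that by (cases x) auto
    qed
    then show "\<exists>n::nat. {enat n<..} \<subseteq> A" by blast
  qed
  then show ?thesis unfolding open_enat_iff by blast
qed

lemma continuous_map_omega_plus_one_tail:
  assumes "continuous_map omega_plus_one X f" "openin X U" "f \<infinity> \<in> U"
  shows "\<exists>N. \<forall>n\<ge>N. f (enat n) \<in> U"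
proof -
  have "open {y. f y \<in> U}"
    using assms(1,2) by (simp add: continuous_map_def omega_plus_one_def)
  then show ?thesis using assms(3) unfolding open_enat_iff_tail by simp
qed

lemma lsc_map_compose:
  assumes e: "continuous_map Z Y e" and \<phi>: "lsc_map Y X \<phi>"
  shows "lsc_map Z X (\<phi> \<circ> e)"
proof -
  have eY: "e z \<in> topspace Y" if "z \<in> topspace Z" for z
    using continuous_map_image_subset_topspace[OF e] that by blast
  have "openin Z {z \<in> topspace Z. (\<phi> \<circ> e) z \<inter> U \<noteq> {}}" if "openin X U" for U
  proof -
    have "openin Y {y \<in> topspace Y. \<phi> y \<inter> U \<noteq> {}}" using \<phi> that by (simp add: lsc_map_def)
    then have "openin Z {z \<in> topspace Z. e z \<in> {y \<in> topspace Y. \<phi> y \<inter> U \<noteq> {}}}"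
      by (rule openin_continuous_map_preimage[OF e])
    moreover have "{z \<in> topspace Z. e z \<in> {y \<in> topspace Y. \<phi> y \<inter> U \<noteq> {}}} =
        {z \<in> topspace Z. (\<phi> \<circ> e) z \<inter> U \<noteq> {}}"
      using eY by auto
    ultimately show ?thesis by simp
  qed
  with \<phi> eY show ?thesis by (simp add: lsc_map_def)
qed

lemma selective_retract:
  assumes sel: "selective Y X"
    and r: "continuous_map Y Z r" and s: "continuous_map Z Y s"
    and rs: "\<And>z. z \<in> topspace Z \<Longrightarrow> r (s z) = z"
  shows "selective Z X"
  unfolding selective_def
proof (intro allI impI, elim conjE)
  fix \<phi> assume \<phi>: "lsc_map Z X \<phi>" and closed: "\<forall>z\<in>topspace Z. closedin X (\<phi> z)"
  have rZ: "r y \<in> topspace Z" if "y \<in> topspace Y" for y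
    using continuous_map_image_subset_topspace[OF r] that by blast
  have sY: "s z \<in> topspace Y" if "z \<in> topspace Z" for z
    using continuous_map_image_subset_topspace[OF s] that by blast
  have "lsc_map Y X (\<phi> \<circ> r)" using r \<phi> by (rule lsc_map_compose)
  moreover have "\<forall>y\<in>topspace Y. closedin X ((\<phi> \<circ> r) y)"
    using closed rZ by simp
  ultimately obtain f where f: "continuous_map Y X f" "\<forall>y\<in>topspace Y. f y \<in> (\<phi> \<circ> r) y"
    using sel unfolding selective_def by blast
  have "continuous_map Z X (f \<circ> s)" using s f(1) by (rule continuous_map_compose)
  moreover have "\<forall>z\<in>topspace Z. (f \<circ> s) z \<in> \<phi> z"
    using f(2) rs sY by (metis comp_apply)
  ultimately show "\<exists>g. continuous_map Z X g \<and> (\<forall>z\<in>topspace Z. g z \<in> \<phi> z)" by blast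
qed

lemma L_selective_selection_through:
  assumes "t1_space X" and L: "L_selective X"
    and \<phi>: "lsc_map omega_plus_one X \<phi>" and closed: "\<And>y. closedin X (\<phi> y)"
    and p: "p \<in> \<phi> \<infinity>"
  shows "\<exists>f. continuous_map omega_plus_one X f \<and> (\<forall>y. f y \<in> \<phi> y) \<and> f \<infinity> = p"
proof -
  define \<psi> where "\<psi> = \<phi>(\<infinity> := {p})"
  have pX: "p \<in> topspace X" using \<phi> p by (auto simp: lsc_map_def omega_plus_one_def)
  have "lsc_map omega_plus_one X \<psi>"
    unfolding lsc_map_def omega_plus_one_def
  proof (intro conjI ballI allI impI)
    fix y show "\<psi> y \<subseteq> topspace X" "\<psi> y \<noteq> {}"
      using \<phi> pX by (auto simp: \<psi>_def lsc_map_def omega_plus_one_def)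
  next
    fix U assume "openin X U"
    then have "open {y. \<phi> y \<inter> U \<noteq> {}}" using \<phi> by (simp add: lsc_map_def omega_plus_one_def)
    moreover have "{y. \<psi> y \<inter> U \<noteq> {}} = (if p \<in> U then {y. \<phi> y \<inter> U \<noteq> {}} else {y. \<phi> y \<inter> U \<noteq> {}} - {\<infinity>})"
      using p by (auto simp: \<psi>_def)
    ultimately show "openin euclidean {y \<in> topspace euclidean. \<psi> y \<inter> U \<noteq> {}}"
      by (simp add: open_Diff)
  qed
  moreover have "\<forall>y\<in>topspace omega_plus_one. closedin X (\<psi> y)"
    using closed assms(1) pX unfolding t1_space_closedin_singleton \<psi>_def by simp
  ultimately obtain f where f: "continuous_map omega_plus_one X f" "\<forall>y. f y \<in> \<psi> y"
    using L unfolding L_selective_def selective_def omega_plus_one_def by auto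
  have "f \<infinity> = p" using f(2)[rule_format, of \<infinity>] by (simp add: \<psi>_def)
  moreover have "f y \<in> \<phi> y" for y
    using f(2)[rule_format, of y] p \<open>f \<infinity> = p\<close> by (cases "y = \<infinity>") (auto simp: \<psi>_def)
  ultimately show ?thesis using f(1) by blast
qed

lemma S_omega_generated:
  "S_omega = topology_generated_by {V. V \<subseteq> range fan_quot \<and> (\<forall>k. open {y. fan_quot (k, y) \<in> V})}"
  unfolding S_omega_def quotient_topology_def openin_sum_topology
  by (simp add: omega_plus_one_def)

lemma topspace_S_omega: "topspace S_omega = range fan_quot"
  unfolding S_omega_generated topology_generated_by_topspace by auto

lemma continuous_map_fan_quot_slice: "continuous_map omega_plus_one S_omega (\<lambda>y. fan_quot (k, y))"
  unfolding S_omega_generated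
  by (rule continuous_on_generated_topo) (auto simp: omega_plus_one_def vimage_def)

lemma continuous_map_from_S_omega:
  assumes slices: "\<And>k. continuous_map omega_plus_one X (\<lambda>y. g (fan_quot (k, y)))"
  shows "continuous_map S_omega X g"
proof -
  have "g (fan_quot (k, y)) \<in> topspace X" for k y
    using continuous_map_image_subset_topspace[OF slices] by (auto simp: omega_plus_one_def)
  moreover have "openin S_omega {z \<in> range fan_quot. g z \<in> U}" if "openin X U" for U
  proof -
    have "open {y. g (fan_quot (k, y)) \<in> U}" for k
      using openin_continuous_map_preimage[OF slices that] by (simp add: omega_plus_one_def)
    then show ?thesis
      unfolding S_omega_generated by (intro topology_generated_by_Basis) auto
  qed
  ultimately show ?thesis
    unfolding continuous_map_def topspace_S_omega by auto
qed

lemma continuous_map_S_omega_snd: "continuous_map S_omega omega_plus_one snd"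
proof (rule continuous_map_from_S_omega)
  fix k
  have "(\<lambda>y. snd (fan_quot (k, y))) = id" by (simp add: fan_quot_def fun_eq_iff)
  then show "continuous_map omega_plus_one omega_plus_one (\<lambda>y. snd (fan_quot (k, y)))" by simp
qed

lemma L_selective_imp_selective_S_omega:
  assumes "t1_space X" and L: "L_selective X"
  shows "selective S_omega X"
  unfolding selective_def topspace_S_omega
proof (intro allI impI, elim conjE)
  fix \<phi> assume \<phi>: "lsc_map S_omega X \<phi>" and closed: "\<forall>z\<in>range fan_quot. closedin X (\<phi> z)"
  have limit: "fan_quot (k, \<infinity>) = (0, \<infinity>)" for k by (simp add: fan_quot_def)
  have "(0, \<infinity>) \<in> range fan_quot" using limit by (metis rangeI)
  then obtain p where p: "p \<in> \<phi> (0, \<infinity>)"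
    using \<phi> unfolding lsc_map_def topspace_S_omega by (meson ex_in_conv)
  have "\<exists>f. continuous_map omega_plus_one X f \<and> (\<forall>y. f y \<in> \<phi> (fan_quot (k, y))) \<and> f \<infinity> = p" for k
  proof (rule L_selective_selection_through[OF assms])
    show "lsc_map omega_plus_one X (\<lambda>y. \<phi> (fan_quot (k, y)))"
      using lsc_map_compose[OF continuous_map_fan_quot_slice \<phi>] by (simp add: comp_def)
    show "closedin X (\<phi> (fan_quot (k, y)))" for y using closed by simp
    show "p \<in> \<phi> (fan_quot (k, \<infinity>))" using p limit by simp
  qed
  then obtain F where F: "\<And>k. continuous_map omega_plus_one X (F k)"
    "\<And>k y. F k y \<in> \<phi> (fan_quot (k, y))" "\<And>k. F k \<infinity> = p"
    by metis
  define g where "g z = F (fst z) (snd z)" for z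
  have g_slice: "g (fan_quot (k, y)) = F k y" for k y
    using F(3) by (simp add: g_def fan_quot_def)
  have "continuous_map S_omega X g"
    by (rule continuous_map_from_S_omega) (simp add: g_slice F(1))
  moreover have "\<forall>z\<in>range fan_quot. g z \<in> \<phi> z"
    using F(2) g_slice by auto
  ultimately show "\<exists>g. continuous_map S_omega X g \<and> (\<forall>z\<in>range fan_quot. g z \<in> \<phi> z)" by blast
qed

lemma selective_S_omega_imp_L_selective:
  assumes "selective S_omega X"
  shows "L_selective X"
  unfolding L_selective_def
  by (rule selective_retract[OF assms continuous_map_S_omega_snd continuous_map_fan_quot_slice])
     (simp add: fan_quot_def)

definition S2_spine :: "enat \<Rightarrow> S2pt" where
  "S2_spine y = (case y of enat n \<Rightarrow> Xn n | \<infinity> \<Rightarrow> Xpt)"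

definition S2_leg :: "nat \<Rightarrow> enat \<Rightarrow> S2pt" where
  "S2_leg n y = (case y of enat m \<Rightarrow> Xnm n m | \<infinity> \<Rightarrow> Xn n)"

definition S2_spine_proj :: "S2pt \<Rightarrow> enat" where
  "S2_spine_proj z = (case z of Xpt \<Rightarrow> \<infinity> | Xn n \<Rightarrow> enat n | Xnm n m \<Rightarrow> enat n)"

lemma S2_spine_simps [simp]: "S2_spine (enat n) = Xn n" "S2_spine \<infinity> = Xpt"
  by (simp_all add: S2_spine_def)

lemma S2_leg_simps [simp]: "S2_leg n (enat m) = Xnm n m" "S2_leg n \<infinity> = Xn n"
  by (simp_all add: S2_leg_def)

lemma S2_spine_proj_simps [simp]:
  "S2_spine_proj Xpt = \<infinity>" "S2_spine_proj (Xn n) = enat n" "S2_spine_proj (Xnm n m) = enat n"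
  by (simp_all add: S2_spine_proj_def)

lemma S2_spine_proj_S2_spine [simp]: "S2_spine_proj (S2_spine y) = y"
  by (cases y) simp_all

lemma S2_spine_proj_S2_leg [simp]: "S2_spine_proj (S2_leg n y) = enat n"
  by (cases y) simp_all

lemma S2_nbhd_base_Xnm: "{Xnm n m} \<in> S2_nbhd_base"
  unfolding S2_nbhd_base_def by blast

lemma S2_nbhd_base_Xn: "finite K \<Longrightarrow> insert (Xn n) {Xnm n m | m. m \<notin> K} \<in> S2_nbhd_base"
  unfolding S2_nbhd_base_def by blast

lemma S2_nbhd_base_Xpt:
  "finite K \<Longrightarrow> insert Xpt ({Xn n | n. n \<notin> K} \<union> {Xnm n m | n m. n \<notin> K \<and> m > f n}) \<in> S2_nbhd_base"
  unfolding S2_nbhd_base_def by blast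

lemma Union_S2_nbhd_base: "\<Union>S2_nbhd_base = UNIV"
proof -
  have "z \<in> \<Union>S2_nbhd_base" for z
    using S2_nbhd_base_Xpt[of "{}" "\<lambda>_. 0"] S2_nbhd_base_Xn[of "{}"] S2_nbhd_base_Xnm
    by (cases z) blast+
  then show ?thesis by blast
qed

lemma topspace_S2: "topspace S2 = UNIV"
  unfolding S2_def topology_generated_by_topspace by (rule Union_S2_nbhd_base)

lemma openin_S2_nbhd_base: "B \<in> S2_nbhd_base \<Longrightarrow> openin S2 B"
  unfolding S2_def by (rule topology_generated_by_Basis)

lemma S2_nbhd_base_cases [consumes 1, case_names Xnm Xn Xpt]:
  assumes "B \<in> S2_nbhd_base"
  obtains (Xnm) n m where "B = {Xnm n m}"
  | (Xn) n K where "finite K" "B = insert (Xn n) {Xnm n m | m. m \<notin> K}"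
  | (Xpt) K f where "finite K" "B = insert Xpt ({Xn n | n. n \<notin> K} \<union> {Xnm n m | n m. n \<notin> K \<and> m > f n})"
  using assms unfolding S2_nbhd_base_def
proof (elim UnE)
  assume "B \<in> {{Xnm n m} | n m. True}"
  then show thesis using that(1) by blast
next
  assume "B \<in> {insert (Xn n) {Xnm n m | m. m \<notin> K} | n K. finite K}"
  then show thesis using that(2) by blast
next
  assume "B \<in> {insert Xpt ({Xn n | n. n \<notin> K} \<union> {Xnm n m | n m. n \<notin> K \<and> m > f n}) | K f. finite K}"
  then show thesis using that(3) by blast
qed

lemma open_vimage_S2_spine:
  assumes "B \<in> S2_nbhd_base"
  shows "open (S2_spine -` B)"
  unfolding open_enat_iff_tail
proof
  assume apex: "\<infinity> \<in> S2_spine -` B"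
  from assms show "\<exists>N. \<forall>n\<ge>N. enat n \<in> S2_spine -` B"
  proof (cases rule: S2_nbhd_base_cases)
    case (Xpt K f)
    then obtain N where "K \<subseteq> {..<N}" using finite_nat_bounded by blast
    then have "\<forall>n\<ge>N. enat n \<in> S2_spine -` B" using Xpt by auto
    then show ?thesis by blast
  qed (use apex in auto)
qed

lemma open_vimage_S2_leg:
  assumes "B \<in> S2_nbhd_base"
  shows "open (S2_leg k -` B)"
  unfolding open_enat_iff_tail
proof
  assume "\<infinity> \<in> S2_leg k -` B"
  then have limit: "Xn k \<in> B" by simp
  from assms show "\<exists>N. \<forall>m\<ge>N. enat m \<in> S2_leg k -` B"
  proof (cases rule: S2_nbhd_base_cases)
    case (Xnm n m)
    then show ?thesis using limit by simp
  next
    case (Xn n K)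
    then obtain N where "K \<subseteq> {..<N}" using finite_nat_bounded by blast
    then have "\<forall>m\<ge>N. enat m \<in> S2_leg k -` B" using Xn limit by auto
    then show ?thesis by blast
  next
    case (Xpt K f)
    then have "\<forall>m\<ge>Suc (f k). enat m \<in> S2_leg k -` B" using limit by auto
    then show ?thesis by blast
  qed
qed

lemma continuous_map_S2_spine: "continuous_map omega_plus_one S2 S2_spine"
  unfolding S2_def omega_plus_one_def
  by (rule continuous_on_generated_topo) (simp_all add: open_vimage_S2_spine Union_S2_nbhd_base)

lemma continuous_map_S2_leg: "continuous_map omega_plus_one S2 (S2_leg k)"
  unfolding S2_def omega_plus_one_def
  by (rule continuous_on_generated_topo) (simp_all add: open_vimage_S2_leg Union_S2_nbhd_base)

lemma continuous_map_from_S2: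
  assumes spine: "continuous_map omega_plus_one X (g \<circ> S2_spine)"
    and legs: "\<And>n. continuous_map omega_plus_one X (g \<circ> S2_leg n)"
  shows "continuous_map S2 X g"
proof -
  have "(g \<circ> S2_spine) y \<in> topspace X" "(g \<circ> S2_leg n) y \<in> topspace X" for n y
    using continuous_map_image_subset_topspace[OF spine]
      continuous_map_image_subset_topspace[OF legs, of n] by (auto simp: omega_plus_one_def)
  then have "g z \<in> topspace X" for z
    by (cases z) (metis comp_apply S2_spine_simps(2), metis comp_apply S2_spine_simps(1),
        metis comp_apply S2_leg_simps(1))
  moreover have "openin S2 {z. g z \<in> U}" if U: "openin X U" for U
    unfolding openin_subopen[of S2 "{z. g z \<in> U}"]
  proof
    fix z assume z: "z \<in> {z. g z \<in> U}"
    show "\<exists>T. openin S2 T \<and> z \<in> T \<and> T \<subseteq> {z. g z \<in> U}"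
    proof (cases z)
      case Xpt
      then obtain N where N: "\<And>n. n \<ge> N \<Longrightarrow> g (Xn n) \<in> U"
        using continuous_map_omega_plus_one_tail[OF spine U] z by auto
      have "\<exists>M. \<forall>m\<ge>M. g (Xnm n m) \<in> U" if "n \<ge> N" for n
        using continuous_map_omega_plus_one_tail[OF legs U] N[OF that] by auto
      then obtain M where M: "\<And>n m. n \<ge> N \<Longrightarrow> m \<ge> M n \<Longrightarrow> g (Xnm n m) \<in> U"
        by metis
      let ?T = "insert Xpt ({Xn n | n. n \<notin> {..<N}} \<union> {Xnm n m | n m. n \<notin> {..<N} \<and> m > M n})"
      have "openin S2 ?T" by (intro openin_S2_nbhd_base S2_nbhd_base_Xpt) simp
      moreover have "?T \<subseteq> {z. g z \<in> U}" using z Xpt N M by auto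
      ultimately show ?thesis using Xpt by blast
    next
      case (Xn n)
      then obtain M where M: "\<And>m. m \<ge> M \<Longrightarrow> g (Xnm n m) \<in> U"
        using continuous_map_omega_plus_one_tail[OF legs U, of n] z by auto
      let ?T = "insert (Xn n) {Xnm n m | m. m \<notin> {..<M}}"
      have "openin S2 ?T" by (intro openin_S2_nbhd_base S2_nbhd_base_Xn) simp
      moreover have "?T \<subseteq> {z. g z \<in> U}" using z Xn M by auto
      ultimately show ?thesis using Xn by blast
    next
      case (Xnm n m)
      then show ?thesis using z openin_S2_nbhd_base[OF S2_nbhd_base_Xnm] by blast
    qed
  qed
  ultimately show ?thesis unfolding continuous_map_def topspace_S2 by auto
qed

lemma continuous_map_S2_spine_proj: "continuous_map S2 omega_plus_one S2_spine_proj"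
proof (rule continuous_map_from_S2)
  have "S2_spine_proj \<circ> S2_spine = id" by (simp add: fun_eq_iff)
  then show "continuous_map omega_plus_one omega_plus_one (S2_spine_proj \<circ> S2_spine)" by simp
  fix n
  have "S2_spine_proj \<circ> S2_leg n = (\<lambda>_. enat n)" by (simp add: fun_eq_iff)
  then show "continuous_map omega_plus_one omega_plus_one (S2_spine_proj \<circ> S2_leg n)"
    by (simp add: omega_plus_one_def)
qed

lemma L_selective_imp_selective_S2:
  assumes "t1_space X" and L: "L_selective X"
  shows "selective S2 X"
  unfolding selective_def topspace_S2
proof (intro allI impI, elim conjE)
  fix \<phi> assume \<phi>: "lsc_map S2 X \<phi>" and closed: "\<forall>z\<in>UNIV. closedin X (\<phi> z)"
  have "lsc_map omega_plus_one X (\<phi> \<circ> S2_spine)"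
    by (rule lsc_map_compose[OF continuous_map_S2_spine \<phi>])
  then obtain h where h: "continuous_map omega_plus_one X h" "\<And>y. h y \<in> \<phi> (S2_spine y)"
    using L closed unfolding L_selective_def selective_def omega_plus_one_def by auto
  have "\<exists>f. continuous_map omega_plus_one X f \<and> (\<forall>y. f y \<in> \<phi> (S2_leg n y)) \<and> f \<infinity> = h (enat n)"
    for n
  proof (rule L_selective_selection_through[OF assms])
    show "lsc_map omega_plus_one X (\<lambda>y. \<phi> (S2_leg n y))"
      using lsc_map_compose[OF continuous_map_S2_leg \<phi>] by (simp add: comp_def)
    show "closedin X (\<phi> (S2_leg n y))" for y using closed by simp
    show "h (enat n) \<in> \<phi> (S2_leg n \<infinity>)" using h(2)[of "enat n"] by simp
  qed
  then obtain F where F: "\<And>n. continuous_map omega_plus_one X (F n)"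
    "\<And>n y. F n y \<in> \<phi> (S2_leg n y)" "\<And>n. F n \<infinity> = h (enat n)"
    by metis
  define g where "g z = (case z of Xpt \<Rightarrow> h \<infinity> | Xn n \<Rightarrow> h (enat n) | Xnm n m \<Rightarrow> F n (enat m))" for z
  have "g (S2_spine y) = h y" for y by (cases y) (simp_all add: g_def)
  moreover have "g (S2_leg n y) = F n y" for n y using F(3) by (cases y) (simp_all add: g_def)
  ultimately have "g \<circ> S2_spine = h" "g \<circ> S2_leg n = F n" for n by (simp_all add: fun_eq_iff)
  then have "continuous_map S2 X g"
    using h(1) F(1) by (intro continuous_map_from_S2) simp_all
  moreover have "g z \<in> \<phi> z" for z
    using h(2)[of "\<infinity>"] h(2)[of "enat _"] F(2)[of _ "enat _"] by (cases z) (simp_all add: g_def)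
  ultimately show "\<exists>g. continuous_map S2 X g \<and> (\<forall>z\<in>UNIV. g z \<in> \<phi> z)" by blast
qed

lemma selective_S2_imp_L_selective:
  assumes "selective S2 X"
  shows "L_selective X"
  unfolding L_selective_def
  by (rule selective_retract[OF assms continuous_map_S2_spine_proj continuous_map_S2_spine])
     simp

theorem mainTheorem16:
  fixes X :: "'a topology"
  assumes "t1_space X"
  shows "(L_selective X \<longleftrightarrow> selective S2 X) \<and> (selective S2 X \<longleftrightarrow> selective S_omega X)"
  using L_selective_imp_selective_S2[OF assms] selective_S2_imp_L_selective
    L_selective_imp_selective_S_omega[OF assms] selective_S_omega_imp_L_selective
  by blast

end
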